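(* In the setting of the context, assume that $E_\varepsilon\to+\infty$ as $\varepsilon\to0^+$ and that there exists $\beta<2$ with $E_\varepsilon=O(\varepsilon^{-\beta})$ as $\varepsilon\to0^+$. Then the maximal solution $\varepsilon(t)$ of $\varepsilon'(t)=\varepsilon_0'\sqrt{\dfrac{m_s+m_f(\varepsilon^* )}{m_s+m_f(\varepsilon(t))}}$, $\varepsilon(0)=\varepsilon^*$, reaches $0$ in finite time with null velocity: there is $T<\infty$ with $\varepsilon(t)>0$ on $[0,T)$, $\varepsilon(t)\to0$ and $\varepsilon'(t)\to0$ as $t\to T^-$.
   Context: Notation: $e_2=(0,1)$. Geometry: $\mathsf C\subset\mathbb R^2$ is a smooth bounded connected open set, symmetric with respect to $\{\xi_1=0\}$, with $0\in\partial\mathsf C$, such that near the origin $\partial\mathsf C$ is a segment of $\{\xi_2=0\}$ with $\mathsf C$ locally above it. $S_0$ is compact, connected, symmetric with respect to $\{\xi_1=0\}$, and $\varepsilon^*>0$ is such that $S_\varepsilon:=S_0+\varepsilon e_2\subset\mathsf C$ for $0<\varepsilon\le\varepsilon^*$. For $0<\varepsilon\le\varepsilon^*$, $\varphi(\varepsilon,\cdot)\in H^1(\mathsf C\setminus S_\varepsilon)$ solves $\Delta\varphi=0$ in $\mathsf C\setminus S_\varepsilon$, $\partial_n\varphi=n_2$ on $\partial S_\varepsilon$, $\partial_n\varphi=0$ on $\partial\mathsf C$ ($n=(n_1,n_2)$ the unit normal pointing out of the fluid domain). The Dirichlet energy is $E_\varepsilon=\int_{\mathsf C\setminus S_\varepsilon}|\nabla\varphi(\varepsilon,\cdot)|^2$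 and the added mass is $m_f(\varepsilon)=\varrho_f E_\varepsilon$ with $\varrho_f>0$; $m_s>0$ and $\varepsilon_0'<0$ are given constants. *)

theory Defs
  imports "HOL-Analysis.Analysis" "HOL-Library.Landau_Symbols"
begin

definition added_mass :: "real \<Rightarrow> (real \<Rightarrow> real) \<Rightarrow> real \<Rightarrow> real" where
  "added_mass rho_f E eps = rho_f * E eps"

definition ode_rhs ::
  "real \<Rightarrow> real \<Rightarrow> (real \<Rightarrow> real) \<Rightarrow> real \<Rightarrow> real \<Rightarrow> real \<Rightarrow> real" where
  "ode_rhs m_s rho_f E eps0' eps_star x =
     eps0' * sqrt ((m_s + added_mass rho_f E eps_star) / (m_s + added_mass rho_f E x))"

text \<open>A solution of the Cauchy problem eps(0) = eps_star on the time interval [0,T)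
  (T may be infinite), with values in the state space (0, eps_star] on which
  E (hence the vector field) is defined.\<close>
definition is_solution ::
  "real \<Rightarrow> real \<Rightarrow> (real \<Rightarrow> real) \<Rightarrow> real \<Rightarrow> real \<Rightarrow> ereal \<Rightarrow> (real \<Rightarrow> real) \<Rightarrow> bool" where
  "is_solution m_s rho_f E eps0' eps_star T eps \<longleftrightarrow>
     0 < T \<and> eps 0 = eps_star \<and>
     (\<forall>t. 0 \<le> t \<and> ereal t < T \<longrightarrow>
        0 < eps t \<and> eps t \<le> eps_star \<and>
        (eps has_real_derivative ode_rhs m_s rho_f E eps0' eps_star (eps t))
          (at t within {s. 0 \<le> s \<and> ereal s < T}))"

definition is_maximal_solution ::
  "real \<Rightarrow> real \<Rightarrow> (real \<Rightarrow> real) \<Rightarrow> real \<Rightarrow> real \<Rightarrow> ereal \<Rightarrow> (real \<Rightarrow> real) \<Rightarrow> bool" where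
  "is_maximal_solution m_s rho_f E eps0' eps_star T eps \<longleftrightarrow>
     is_solution m_s rho_f E eps0' eps_star T eps \<and>
     (\<forall>T' eps'. is_solution m_s rho_f E eps0' eps_star T' eps' \<and> T \<le> T' \<and>
        (\<forall>t. 0 \<le> t \<and> ereal t < T \<longrightarrow> eps' t = eps t) \<longrightarrow> T' = T)"

end

theory Submission
  imports Defs "HOL-Complex_Analysis.Conformal_Mappings"
begin

text \<open>Separation of variables. The time a solution needs to descend from \<open>\<epsilon>\<^sup>*\<close> to a
  height \<open>y\<close> is \<open>F y = \<integral>\<^sub>y\<^sup>\<epsilon>\<^sup>* dx / |\<epsilon>'(x)|\<close>, and every solution satisfies \<open>F (\<epsilon> t) = t\<close>;
  the maximal solution is therefore the inverse of \<open>F\<close>, living on \<open>[0, sup F)\<close>.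
  Since \<open>1 / |\<epsilon>'(x)|\<close> grows like \<open>sqrt (E x) = O(x\<^sup>-\<^sup>\<beta>\<^sup>/\<^sup>2)\<close> with \<open>\<beta>/2 < 1\<close>, the
  integral converges and \<open>sup F\<close> is finite; the velocity is proportional to
  \<open>1 / sqrt (m\<^sub>s + \<rho>\<^sub>f E x)\<close>, which tends to \<open>0\<close> as \<open>E\<close> blows up.\<close>

definition ivp_solution :: "(real \<Rightarrow> real) \<Rightarrow> real \<Rightarrow> ereal \<Rightarrow> (real \<Rightarrow> real) \<Rightarrow> bool" where
  "ivp_solution f a T eps \<longleftrightarrow>
     0 < T \<and> eps 0 = a \<and>
     (\<forall>t. 0 \<le> t \<and> ereal t < T \<longrightarrow>
        0 < eps t \<and> eps t \<le> a \<and>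
        (eps has_real_derivative f (eps t)) (at t within {s. 0 \<le> s \<and> ereal s < T}))"

definition maximal_ivp_solution :: "(real \<Rightarrow> real) \<Rightarrow> real \<Rightarrow> ereal \<Rightarrow> (real \<Rightarrow> real) \<Rightarrow> bool" where
  "maximal_ivp_solution f a T eps \<longleftrightarrow>
     ivp_solution f a T eps \<and>
     (\<forall>T' eps'. ivp_solution f a T' eps' \<and> T \<le> T' \<and>
        (\<forall>t. 0 \<le> t \<and> ereal t < T \<longrightarrow> eps' t = eps t) \<longrightarrow> T' = T)"

locale descending_field =
  fixes f :: "real \<Rightarrow> real" and a :: real
  assumes a_pos: "0 < a"
    and f_neg: "\<And>x. x \<in> {0<..a} \<Longrightarrow> f x < 0"
    and f_cont: "continuous_on {0<..a} f"
begin

text \<open>Freezing \<open>f\<close> above \<open>a\<close> makes the travel time differentiable at \<open>a\<close> itself.\<close>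

definition slowness :: "real \<Rightarrow> real" where
  "slowness x = - 1 / f (min x a)"

definition travel_time :: "real \<Rightarrow> real" where
  "travel_time y = integral {y..a + 1} slowness - integral {a..a + 1} slowness"

lemma slowness_eq: "x \<in> {0<..a} \<Longrightarrow> slowness x = - 1 / f x"
  by (simp add: slowness_def min_absorb1)

lemma f_min_neg: "0 < x \<Longrightarrow> f (min x a) < 0"
  using f_neg[of "min x a"] a_pos by simp

lemma slowness_pos: "0 < x \<Longrightarrow> 0 < slowness x"
  using f_min_neg[of x] by (simp add: slowness_def divide_neg_neg)

lemma slowness_mult_f: "x \<in> {0<..a} \<Longrightarrow> slowness x * f x = - 1"
  using f_neg[of x] by (simp add: slowness_eq)

lemma continuous_on_slowness: "continuous_on {0<..} slowness"
proof -
  have "continuous_on {0<..} (f \<circ> (\<lambda>x. min x a))"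
    by (rule continuous_on_compose[OF continuous_on_min[OF continuous_on_id continuous_on_const]])
      (rule continuous_on_subset[OF f_cont], use a_pos in auto)
  then show ?thesis
    unfolding slowness_def o_def
    by (intro continuous_intros) (auto dest: f_min_neg)
qed

lemma travel_time_has_derivative:
  assumes "0 < x" "x < a + 1"
  shows "(travel_time has_real_derivative - slowness x) (at x)"
proof -
  have "continuous_on {x/2..a + 1} slowness"
    by (rule continuous_on_subset[OF continuous_on_slowness]) (use assms in auto)
  then have "((\<lambda>y. integral {y..a + 1} slowness) has_real_derivative - slowness x)
      (at x within {x/2..a + 1})"
    by (rule integral_has_real_derivative') (use assms in auto)
  moreover have "at x within {x/2..a + 1} = at x"
    by (rule at_within_interior) (use assms in simp)
  ultimately show ?thesis
    unfolding travel_time_def by (auto intro!: derivative_eq_intros)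
qed

lemma continuous_on_travel_time: "continuous_on {0<..<a + 1} travel_time"
proof (rule continuous_at_imp_continuous_on, rule ballI)
  fix x assume "x \<in> {0<..<a + 1}"
  then show "isCont travel_time x"
    using travel_time_has_derivative[of x] DERIV_isCont by auto
qed

lemma travel_time_strict_decreasing:
  assumes "0 < x" "x < y" "y < a + 1"
  shows "travel_time y < travel_time x"
proof (rule DERIV_neg_imp_decreasing[OF assms(2)])
  fix z assume "x \<le> z" "z \<le> y"
  with assms have "0 < z" "z < a + 1" by auto
  then show "\<exists>d. DERIV travel_time z :> d \<and> d < 0"
    using travel_time_has_derivative slowness_pos by force
qed

lemma travel_time_decreasing: "0 < x \<Longrightarrow> x \<le> y \<Longrightarrow> y < a + 1 \<Longrightarrow> travel_time y \<le> travel_time x"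
  using travel_time_strict_decreasing[of x y] by (cases "x = y") auto

lemma travel_time_a [simp]: "travel_time a = 0"
  by (simp add: travel_time_def)

lemma inj_on_travel_time: "inj_on travel_time {0<..<a + 1}"
proof (rule inj_onI)
  fix x y assume "x \<in> {0<..<a + 1}" "y \<in> {0<..<a + 1}" "travel_time x = travel_time y"
  then show "x = y"
    using travel_time_strict_decreasing[of x y] travel_time_strict_decreasing[of y x]
    by (cases x y rule: linorder_cases) auto
qed

text \<open>\<open>t \<mapsto> travel_time (eps t) - t\<close> has derivative \<open>- slowness (eps t) * f (eps t) - 1 = 0\<close>.\<close>

lemma ivp_solution_travel_time:
  assumes sol: "ivp_solution f a T eps" and t: "0 \<le> t" "ereal t < T"
  shows "travel_time (eps t) = t"
proof -
  define S where "S = {s. 0 \<le> s \<and> ereal s < T}"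
  have sol_S: "eps t \<in> {0<..a} \<and> (eps has_real_derivative f (eps t)) (at t within S)"
    if "t \<in> S" for t
    using sol that unfolding ivp_solution_def S_def by auto
  have "convex S"
    unfolding is_interval_convex_1[symmetric] is_interval_1 S_def
    by (auto intro: le_less_trans[of _ "ereal _" T])
  then have "\<exists>k. \<forall>t\<in>S. travel_time (eps t) - t = k"
  proof (rule has_field_derivative_zero_constant)
    fix t assume "t \<in> S"
    with sol_S have e: "eps t \<in> {0<..a}"
      and d: "(eps has_real_derivative f (eps t)) (at t within S)" by auto
    have "DERIV travel_time (eps t) :> - slowness (eps t)"
      using e by (intro travel_time_has_derivative) auto
    from DERIV_chain2[OF this d]
    have "((\<lambda>s. travel_time (eps s) - s) has_real_derivative
        - slowness (eps t) * f (eps t) - 1) (at t within S)"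
      by (auto intro!: derivative_eq_intros)
    then show "((\<lambda>s. travel_time (eps s) - s) has_real_derivative 0) (at t within S)"
      using slowness_mult_f[OF e] by simp
  qed
  then obtain k where k: "\<And>t. t \<in> S \<Longrightarrow> travel_time (eps t) - t = k" by blast
  have "0 \<in> S" "t \<in> S"
    using sol t unfolding ivp_solution_def S_def by (auto simp: zero_ereal_def)
  then show ?thesis
    using k[of 0] k[of t] sol unfolding ivp_solution_def by simp
qed

lemma bdd_above_travel_time:
  assumes p: "p < 1" and \<delta>: "0 < \<delta>" "\<delta> \<le> a"
    and bound: "\<And>x. 0 < x \<Longrightarrow> x \<le> \<delta> \<Longrightarrow> - 1 / f x \<le> K * x powr - p"
  shows "bdd_above (travel_time ` {0<..a})"
proof -
  have slowness_le: "slowness x \<le> K * x powr - p" if "0 < x" "x \<le> \<delta>" for x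
    using bound[OF that] that \<delta> by (simp add: slowness_eq)
  have "0 < K * \<delta> powr - p"
    using slowness_pos[OF \<delta>(1)] slowness_le[of \<delta>] \<delta> by simp
  then have "0 < K"
    using \<delta> by (simp add: zero_less_mult_iff)
  \<comment> \<open>\<open>P\<close> is a primitive of the bound, so \<open>travel_time + P\<close> is nondecreasing near \<open>0\<close>.\<close>
  define P where "P y = K / (1 - p) * y powr (1 - p)" for y
  have P_nonneg: "0 \<le> P y" for y
    using \<open>0 < K\<close> p by (simp add: P_def)
  have potential: "travel_time x + P x \<le> travel_time \<delta> + P \<delta>" if x: "0 < x" "x \<le> \<delta>" for x
  proof (rule DERIV_nonneg_imp_nondecreasing[OF x(2)])
    fix y assume y: "x \<le> y" "y \<le> \<delta>"
    have "((\<lambda>y. travel_time y + P y) has_real_derivative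
        - slowness y + K / (1 - p) * ((1 - p) * y powr (1 - p - 1))) (at y)"
      unfolding P_def using x y \<delta>
      by (intro DERIV_add travel_time_has_derivative DERIV_cmult has_real_derivative_powr) auto
    moreover have "0 \<le> - slowness y + K / (1 - p) * ((1 - p) * y powr (1 - p - 1))"
      using slowness_le[of y] x y p by simp
    ultimately show "\<exists>D. ((\<lambda>y. travel_time y + P y) has_real_derivative D) (at y) \<and> 0 \<le> D"
      by blast
  qed
  have "travel_time x \<le> travel_time \<delta> + P \<delta>" if "x \<in> {0<..a}" for x
  proof (cases "x \<le> \<delta>")
    case True
    then show ?thesis using potential[of x] P_nonneg[of x] that by auto
  next
    case False
    then show ?thesis using travel_time_decreasing[of \<delta> x] P_nonneg[of \<delta>] that \<delta> by auto
  qed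
  then show ?thesis by (intro bdd_aboveI2)
qed

end

locale finite_descent = descending_field +
  assumes bdd_travel_time: "bdd_above (travel_time ` {0<..a})"
begin

definition arrival_time :: real where
  "arrival_time = Sup (travel_time ` {0<..a})"

lemma travel_time_less_arrival_time:
  assumes "x \<in> {0<..a}"
  shows "travel_time x < arrival_time"
proof -
  have "travel_time x < travel_time (x/2)"
    using assms by (intro travel_time_strict_decreasing) auto
  also have "\<dots> \<le> arrival_time"
    unfolding arrival_time_def using assms by (intro cSup_upper bdd_travel_time) auto
  finally show ?thesis .
qed

lemma arrival_time_pos: "0 < arrival_time"
  using travel_time_less_arrival_time[of a] a_pos by simp

lemma travel_time_onto:
  assumes "0 \<le> t" "t < arrival_time"
  shows "\<exists>x\<in>{0<..a}. travel_time x = t"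
proof -
  have "t < Sup (travel_time ` {0<..a})"
    using assms(2) unfolding arrival_time_def .
  then obtain x0 where x0: "x0 \<in> {0<..a}" "t < travel_time x0"
    using a_pos by (auto elim: less_cSupE)
  have "continuous_on {x0..a} travel_time"
    by (rule continuous_on_subset[OF continuous_on_travel_time]) (use x0 in auto)
  moreover have "travel_time a \<le> t" "t \<le> travel_time x0" "x0 \<le> a"
    using assms x0 by auto
  ultimately obtain x where "x0 \<le> x" "x \<le> a" "travel_time x = t"
    using IVT2' by blast
  with x0 show ?thesis by auto
qed

lemma ivp_solution_lifespan:
  assumes sol: "ivp_solution f a T eps"
  shows "T \<le> ereal arrival_time"
proof (rule ccontr)
  assume "\<not> T \<le> ereal arrival_time"
  then have "ereal arrival_time < T" by simp
  with sol have "travel_time (eps arrival_time) = arrival_time"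
    and "eps arrival_time \<in> {0<..a}"
    using arrival_time_pos ivp_solution_travel_time unfolding ivp_solution_def by auto
  then show False using travel_time_less_arrival_time by fastforce
qed

lemma ivp_solution_inverse_travel_time:
  "ivp_solution f a (ereal arrival_time) (inv_into {0<..<a + 1} travel_time)"
  (is "ivp_solution f a _ ?H")
proof -
  have H: "?H (travel_time x) = x" if "x \<in> {0<..<a + 1}" for x
    using inj_on_travel_time that by (rule inv_into_f_f)
  show ?thesis
    unfolding ivp_solution_def
  proof (intro conjI allI impI)
    show "0 < ereal arrival_time" "?H 0 = a"
      using arrival_time_pos H[of a] a_pos by auto
    fix t assume t: "0 \<le> t \<and> ereal t < ereal arrival_time"
    then obtain x where x: "x \<in> {0<..a}" "travel_time x = t"
      using travel_time_onto[of t] t by auto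
    then have Ht: "?H t = x" using H[of x] by auto
    then show "0 < ?H t" "?H t \<le> a" using x by auto
    have "DERIV ?H (travel_time x) :> inverse (- slowness x)"
      by (rule has_field_derivative_inverse_strong[OF travel_time_has_derivative _ _ _
            continuous_on_travel_time H])
        (use x slowness_pos[of x] in auto)
    moreover have "inverse (- slowness x) = f (?H t)"
      unfolding Ht by (intro inverse_unique) (simp add: slowness_mult_f[OF x(1)])
    ultimately show "(?H has_real_derivative f (?H t))
        (at t within {s. 0 \<le> s \<and> ereal s < ereal arrival_time})"
      using x by (auto intro: has_field_derivative_at_within)
  qed
qed

lemma maximal_ivp_solution_exists: "\<exists>T eps. maximal_ivp_solution f a T eps"
  using ivp_solution_inverse_travel_time ivp_solution_lifespan
  unfolding maximal_ivp_solution_def by (blast intro: order.antisym)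

lemma maximal_ivp_solution_lifespan:
  assumes "maximal_ivp_solution f a T eps"
  shows "T = ereal arrival_time"
proof -
  have sol: "ivp_solution f a T eps" and T: "T \<le> ereal arrival_time"
    using assms ivp_solution_lifespan unfolding maximal_ivp_solution_def by auto
  have "inv_into {0<..<a + 1} travel_time t = eps t" if "0 \<le> t" "ereal t < T" for t
  proof -
    have "eps t \<in> {0<..<a + 1}"
      using sol that unfolding ivp_solution_def by auto
    then have "inv_into {0<..<a + 1} travel_time (travel_time (eps t)) = eps t"
      by (rule inv_into_f_f[OF inj_on_travel_time])
    then show ?thesis
      using ivp_solution_travel_time[OF sol that] by simp
  qed
  then show ?thesis
    using assms ivp_solution_inverse_travel_time T unfolding maximal_ivp_solution_def by blast
qed

lemma eventually_in_lifespan: "eventually (\<lambda>t. 0 < t \<and> t < arrival_time) (at_left arrival_time)"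
  unfolding eventually_at_left_field using arrival_time_pos by (intro exI[of _ 0]) auto

lemma ivp_solution_tendsto_0:
  assumes sol: "ivp_solution f a (ereal arrival_time) eps"
  shows "(eps \<longlongrightarrow> 0) (at_left arrival_time)"
proof (rule order_tendstoI)
  fix e :: real assume "e < 0"
  show "eventually (\<lambda>t. e < eps t) (at_left arrival_time)"
    using eventually_in_lifespan
  proof eventually_elim
    case (elim t)
    then have "0 < eps t"
      using sol unfolding ivp_solution_def by auto
    with \<open>e < 0\<close> show ?case by simp
  qed
next
  fix e :: real assume "0 < e"
  define e' where "e' = min e a"
  have e': "e' \<in> {0<..a}" "e' \<le> e"
    unfolding e'_def using \<open>0 < e\<close> a_pos by auto
  have "0 \<le> travel_time e'"
    using travel_time_decreasing[of e' a] e' by auto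
  with travel_time_less_arrival_time[OF e'(1)]
  have "eventually (\<lambda>t. travel_time e' < t \<and> 0 < t \<and> t < arrival_time) (at_left arrival_time)"
    unfolding eventually_at_left_field by (auto intro!: exI[of _ "travel_time e'"])
  then show "eventually (\<lambda>t. eps t < e) (at_left arrival_time)"
  proof eventually_elim
    case (elim t)
    then have "travel_time (eps t) = t" "eps t \<in> {0<..a}"
      using ivp_solution_travel_time[OF sol, of t] sol unfolding ivp_solution_def by auto
    then have "eps t < e'"
      using elim e' travel_time_decreasing[of e' "eps t"] by (cases "eps t < e'") auto
    then show ?case using e' by simp
  qed
qed

lemma ivp_solution_deriv_tendsto_0:
  assumes sol: "ivp_solution f a (ereal arrival_time) eps"
    and f_lim: "(f \<longlongrightarrow> 0) (at_right 0)"
  shows "(deriv eps \<longlongrightarrow> 0) (at_left arrival_time)"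
proof -
  define S where "S = {s. 0 \<le> s \<and> ereal s < ereal arrival_time}"
  have interior_S: "{0<..<arrival_time} \<subseteq> interior S"
    by (rule interior_maximal) (auto simp: S_def)
  have ev: "eventually (\<lambda>t. deriv eps t = f (eps t) \<and> 0 < eps t) (at_left arrival_time)"
    using eventually_in_lifespan
  proof eventually_elim
    case (elim t)
    then have "at t within S = at t"
      using interior_S by (intro at_within_interior) auto
    moreover have "0 < eps t" "(eps has_real_derivative f (eps t)) (at t within S)"
      using sol elim unfolding ivp_solution_def S_def by auto
    ultimately show ?case by (simp add: DERIV_imp_deriv)
  qed
  then have "filterlim eps (at_right 0) (at_left arrival_time)"
    by (intro tendsto_imp_filterlim_at_right ivp_solution_tendsto_0[OF sol])
      (auto elim: eventually_mono)
  then have "((\<lambda>t. f (eps t)) \<longlongrightarrow> 0) (at_left arrival_time)"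
    by (rule filterlim_compose[OF f_lim])
  moreover have "eventually (\<lambda>t. f (eps t) = deriv eps t) (at_left arrival_time)"
    using ev by eventually_elim simp
  ultimately show ?thesis
    by (rule Lim_transform_eventually)
qed

end

locale added_mass_problem =
  fixes m_s rho_f eps0' eps_star :: real and E :: "real \<Rightarrow> real"
  assumes eps_star_pos: "0 < eps_star"
    and m_s_pos: "0 < m_s"
    and rho_f_pos: "0 < rho_f"
    and eps0'_neg: "eps0' < 0"
    and E_nonneg: "\<And>x. x \<in> {0<..eps_star} \<Longrightarrow> 0 \<le> E x"
    and E_cont: "continuous_on {0<..eps_star} E"
begin

lemma total_mass_pos: "x \<in> {0<..eps_star} \<Longrightarrow> 0 < m_s + added_mass rho_f E x"
  using E_nonneg[of x] m_s_pos rho_f_pos by (simp add: added_mass_def add_pos_nonneg)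

lemma ode_rhs_neg: "x \<in> {0<..eps_star} \<Longrightarrow> ode_rhs m_s rho_f E eps0' eps_star x < 0"
  using total_mass_pos[of x] total_mass_pos[of eps_star] eps_star_pos eps0'_neg
  by (simp add: ode_rhs_def mult_neg_pos)

lemma continuous_on_ode_rhs: "continuous_on {0<..eps_star} (ode_rhs m_s rho_f E eps0' eps_star)"
proof -
  have "\<forall>x\<in>{0<..eps_star}. m_s + rho_f * E x \<noteq> 0"
    using total_mass_pos unfolding added_mass_def by (metis less_irrefl)
  then show ?thesis
    unfolding ode_rhs_def[abs_def] added_mass_def by (intro continuous_intros E_cont)
qed

sublocale descending_field "ode_rhs m_s rho_f E eps0' eps_star" eps_star
  using eps_star_pos ode_rhs_neg continuous_on_ode_rhs by unfold_locales

lemma ode_rhs_tendsto_0: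
  assumes "filterlim E at_top (at_right 0)"
  shows "(ode_rhs m_s rho_f E eps0' eps_star \<longlongrightarrow> 0) (at_right 0)"
proof -
  have "filterlim (\<lambda>x. m_s + added_mass rho_f E x) at_top (at_right 0)"
    unfolding added_mass_def using assms rho_f_pos
    by (intro filterlim_tendsto_add_at_top[OF tendsto_const]
        filterlim_tendsto_pos_mult_at_top[OF tendsto_const])
  then have "((\<lambda>x. (m_s + added_mass rho_f E eps_star) / (m_s + added_mass rho_f E x))
      \<longlongrightarrow> 0) (at_right 0)"
    by (intro tendsto_divide_0[OF tendsto_const] filterlim_at_top_imp_at_infinity)
  then have "((\<lambda>x. eps0' * sqrt ((m_s + added_mass rho_f E eps_star) / (m_s + added_mass rho_f E x)))
      \<longlongrightarrow> eps0' * sqrt 0) (at_right 0)"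
    by (intro tendsto_intros)
  then show ?thesis
    unfolding ode_rhs_def[abs_def] by simp
qed

lemma inverse_ode_rhs_eq:
  assumes "x \<in> {0<..eps_star}"
  shows "- 1 / ode_rhs m_s rho_f E eps0' eps_star x
    = sqrt ((m_s + added_mass rho_f E x) / (m_s + added_mass rho_f E eps_star)) / - eps0'"
  using total_mass_pos[OF assms] total_mass_pos[of eps_star] eps_star_pos eps0'_neg
  by (simp add: ode_rhs_def real_sqrt_divide field_simps)

text \<open>Below \<open>min 1 eps_star\<close> the bound \<open>E x \<le> C x\<^sup>-\<^sup>\<beta>\<close> and \<open>1 \<le> x\<^sup>-\<^sup>\<gamma>\<close> with
  \<open>\<gamma> = max \<beta> 0\<close> give \<open>m\<^sub>s + \<rho>\<^sub>f E x \<le> (m\<^sub>s + \<rho>\<^sub>f C) x\<^sup>-\<^sup>\<gamma>\<close>; take square roots.\<close>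

lemma bdd_above_travel_time_of_bigo:
  assumes "\<beta> < 2" "E \<in> O[at_right 0](\<lambda>x. x powr - \<beta>)"
  shows "bdd_above (travel_time ` {0<..eps_star})"
proof -
  obtain C where C: "0 < C" "eventually (\<lambda>x. norm (E x) \<le> C * norm (x powr - \<beta>)) (at_right 0)"
    using landau_o.bigE[OF assms(2)] by blast
  then obtain d where d: "0 < d" "\<And>y. 0 < y \<Longrightarrow> y < d \<Longrightarrow> \<bar>E y\<bar> \<le> C * y powr - \<beta>"
    unfolding eventually_at_right_field by auto
  define \<gamma> where "\<gamma> = max \<beta> 0"
  define \<delta> where "\<delta> = min (d/2) (min 1 eps_star)"
  define c where "c = m_s + added_mass rho_f E eps_star"
  define K where "K = sqrt ((m_s + rho_f * C) / c) / - eps0'"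
  have \<delta>: "0 < \<delta>" "\<delta> < d" "\<delta> \<le> 1" "\<delta> \<le> eps_star"
    unfolding \<delta>_def using d(1) eps_star_pos by auto
  have bound: "- 1 / ode_rhs m_s rho_f E eps0' eps_star y \<le> K * y powr - (\<gamma>/2)"
    if y: "0 < y" "y \<le> \<delta>" for y
  proof -
    have "E y \<le> C * y powr - \<beta>"
      using d(2)[of y] y \<delta> by simp
    also have "\<dots> \<le> C * y powr - \<gamma>"
      using C(1) y \<delta> by (intro mult_left_mono powr_mono') (auto simp: \<gamma>_def)
    finally have "E y \<le> C * y powr - \<gamma>" .
    moreover have "1 \<le> y powr - \<gamma>"
      using powr_mono'[of "- \<gamma>" 0 y] y \<delta> by (simp add: \<gamma>_def)
    ultimately have "m_s + added_mass rho_f E y \<le> (m_s + rho_f * C) * y powr - \<gamma>"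
      using m_s_pos rho_f_pos unfolding added_mass_def distrib_right
      by (intro add_mono) (auto intro: mult_left_mono order.trans[OF _ mult_left_mono])
    then have "sqrt ((m_s + added_mass rho_f E y) / c)
        \<le> sqrt ((m_s + rho_f * C) / c * y powr - \<gamma>)"
      using total_mass_pos[of eps_star] eps_star_pos unfolding c_def
      by (intro real_sqrt_le_mono) (simp add: divide_right_mono)
    also have "\<dots> = sqrt ((m_s + rho_f * C) / c) * sqrt (y powr - \<gamma>)"
      by (rule real_sqrt_mult)
    also have "sqrt (y powr - \<gamma>) = y powr - (\<gamma>/2)"
      using powr_half_sqrt_powr[of y "- \<gamma>"] y by simp
    finally have "sqrt ((m_s + added_mass rho_f E y) / c)
        \<le> sqrt ((m_s + rho_f * C) / c) * y powr - (\<gamma>/2)" .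
    then have "sqrt ((m_s + added_mass rho_f E y) / c) / - eps0'
        \<le> sqrt ((m_s + rho_f * C) / c) * y powr - (\<gamma>/2) / - eps0'"
      using eps0'_neg by (intro divide_right_mono) auto
    also have "\<dots> = K * y powr - (\<gamma>/2)"
      unfolding K_def by simp
    finally show ?thesis
      using inverse_ode_rhs_eq[of y] y \<delta> unfolding c_def by simp
  qed
  have "\<gamma>/2 < 1"
    using assms(1) by (simp add: \<gamma>_def)
  from this \<delta>(1,4) bound show ?thesis
    by (rule bdd_above_travel_time)
qed

end

lemma is_maximal_solution_iff_maximal_ivp_solution:
  "is_maximal_solution m_s rho_f E eps0' eps_star T eps \<longleftrightarrow>
     maximal_ivp_solution (ode_rhs m_s rho_f E eps0' eps_star) eps_star T eps"
  by (simp add: is_maximal_solution_def maximal_ivp_solution_def is_solution_def ivp_solution_def)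

theorem lemma1p3:
  fixes E :: "real \<Rightarrow> real"
    and m_s rho_f eps0' eps_star :: real
  assumes eps_star_pos: "0 < eps_star"
    and m_s_pos: "0 < m_s"
    and rho_f_pos: "0 < rho_f"
    and eps0'_neg: "eps0' < 0"
    and E_nonneg: "\<forall>x\<in>{0<..eps_star}. 0 \<le> E x"
    and E_cont: "continuous_on {0<..eps_star} E"
    and E_blowup: "filterlim E at_top (at_right 0)"
    and E_bound: "\<exists>\<beta><2. E \<in> O[at_right 0](\<lambda>x. x powr (- \<beta>))"
  shows "(\<exists>T eps. is_maximal_solution m_s rho_f E eps0' eps_star T eps) \<and>
         (\<forall>T eps. is_maximal_solution m_s rho_f E eps0' eps_star T eps \<longrightarrow>
            T < \<infinity> \<and>
            (eps \<longlongrightarrow> 0) (at_left (real_of_ereal T)) \<and>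
            ((\<lambda>t. deriv eps t) \<longlongrightarrow> 0) (at_left (real_of_ereal T)))"
proof -
  interpret P: added_mass_problem m_s rho_f eps0' eps_star E
    using assms by unfold_locales auto
  obtain \<beta> where "\<beta> < 2" "E \<in> O[at_right 0](\<lambda>x. x powr - \<beta>)"
    using E_bound by blast
  then have "bdd_above (P.travel_time ` {0<..eps_star})"
    by (rule P.bdd_above_travel_time_of_bigo)
  then interpret Q: finite_descent "ode_rhs m_s rho_f E eps0' eps_star" eps_star
    by (intro finite_descent.intro P.descending_field_axioms finite_descent_axioms.intro)
  have rhs_lim: "(ode_rhs m_s rho_f E eps0' eps_star \<longlongrightarrow> 0) (at_right 0)"
    using E_blowup by (rule P.ode_rhs_tendsto_0)
  show ?thesis
    unfolding is_maximal_solution_iff_maximal_ivp_solution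
  proof (intro conjI allI impI Q.maximal_ivp_solution_exists)
    fix T eps
    assume max: "maximal_ivp_solution (ode_rhs m_s rho_f E eps0' eps_star) eps_star T eps"
    then have T: "T = ereal Q.arrival_time"
      by (rule Q.maximal_ivp_solution_lifespan)
    with max have sol:
      "ivp_solution (ode_rhs m_s rho_f E eps0' eps_star) eps_star (ereal Q.arrival_time) eps"
      unfolding maximal_ivp_solution_def by simp
    show "T < \<infinity>"
      using T by simp
    show "(eps \<longlongrightarrow> 0) (at_left (real_of_ereal T))"
      using Q.ivp_solution_tendsto_0[OF sol] T by simp
    show "(deriv eps \<longlongrightarrow> 0) (at_left (real_of_ereal T))"
      using Q.ivp_solution_deriv_tendsto_0[OF sol rhs_lim] T by simp
  qed
qed

end
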